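(* In each iteration of Algorithm 1 (with $i^*,i_L$ the quantities of that iteration), for every $i$ with $i^*<i<b(i^* )$ we have $\mathrm{avg}(i^*,i)\le\mathrm{avg}(i,b(i^* ))$, and for every $i$ with $i_L<i<i^*$ we have $\mathrm{avg}(i,b(i^* ))<\mathrm{avg}(i,i^* )$.
   Context: Problem (P): given an integer $n\ge1$, reals $0<q_1\le\cdots\le q_n$, $z_1,\dots,z_n>0$ and $K>0$, maximize $\sum_{i=1}^n x_i$ subject to $0\le x_i\le q_i$, $0\le x_1\le\cdots\le x_n$, $\sum_{i=1}^n z_ix_i\le K$. For $1\le i<j\le n+1$ let $\mathrm{sum}(i,j)=z_i+\cdots+z_{j-1}$ and $\mathrm{avg}(i,j)=\mathrm{sum}(i,j)/(j-i)$. Algorithm 1 (run on an instance of (P)): Initialize $S=\{0,n+1\}$, $y_i=\mathrm{avg}(i,n+1)$ and $x_i=0$ for $i=1,\dots,n$, and $\hat B=K$. While $\hat B>0$ and $S\ne\{0,1,\dots,n+1\}$, perform an iteration: let $i^*$ be the index $i\in\{1,\dots,n\}\setminus S$ minimizing $y_i$, ties broken in favour of the smallest index; let $i_L=\max\{j\in S:j<i^*\}$ and $i_R=\min\{j\in S:j>i^*\}$; set $d=\min\{\hat B/((i_R-i^* )y_{i^*}),\ q_{i^*}-x_{i^*}\}$; set $\hat B\leftarrow\hat B-d(i_R-i^* )y_{i^*}$; set $x_i\leftarrow x_i+d$ for all $i^*\le i<i_R$; set $y_i\leftarrow\mathrm{avg}(i,i^* )$ for all $i_L<i<i^*$; add $i^*$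 to $S$. Finally output $x_1,\dots,x_n$. Blocker: for $1\le i\le n$, $b(i)$ is the value of $i^*$ in the last iteration in which $y_i$ is updated (i.e. the last iteration with $i_L<i<i^*$); if $y_i$ is never updated, $b(i)=n+1$. *)

theory Defs
  imports Complex_Main
begin

text \<open>Indices 1..n; z, q are functions on nat (only values at 1..n matter).\<close>

definition sumz :: "(nat \<Rightarrow> real) \<Rightarrow> nat \<Rightarrow> nat \<Rightarrow> real" where
  "sumz z i j = (\<Sum>k\<in>{i..<j}. z k)"

definition avg :: "(nat \<Rightarrow> real) \<Rightarrow> nat \<Rightarrow> nat \<Rightarrow> real" where
  "avg z i j = sumz z i j / real (j - i)"

record alg_state =
  stS :: "nat set"
  sty :: "nat \<Rightarrow> real"
  stx :: "nat \<Rightarrow> real"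
  stB :: real

definition istar :: "nat \<Rightarrow> alg_state \<Rightarrow> nat" where
  "istar n st = (LEAST i. i \<in> {1..n} - stS st \<and>
                   (\<forall>j\<in>{1..n} - stS st. sty st i \<le> sty st j))"

definition iL :: "alg_state \<Rightarrow> nat \<Rightarrow> nat" where
  "iL st i = Max {j \<in> stS st. j < i}"

definition iR :: "alg_state \<Rightarrow> nat \<Rightarrow> nat" where
  "iR st i = Min {j \<in> stS st. i < j}"

definition alg_init :: "nat \<Rightarrow> (nat \<Rightarrow> real) \<Rightarrow> real \<Rightarrow> alg_state" where
  "alg_init n z K = \<lparr> stS = {0, n + 1}, sty = (\<lambda>i. avg z i (n + 1)),
                      stx = (\<lambda>i. 0), stB = K \<rparr>"

definition alg_step :: "nat \<Rightarrow> (nat \<Rightarrow> real) \<Rightarrow> (nat \<Rightarrow> real) \<Rightarrow> alg_state \<Rightarrow> alg_state" where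
  "alg_step n q z st =
     (let i = istar n st; l = iL st i; r = iR st i; yi = sty st i;
          d = min (stB st / (real (r - i) * yi)) (q i - stx st i)
      in \<lparr> stS = insert i (stS st),
           sty = (\<lambda>k. if l < k \<and> k < i then avg z k i else sty st k),
           stx = (\<lambda>k. if i \<le> k \<and> k < r then stx st k + d else stx st k),
           stB = stB st - d * real (r - i) * yi \<rparr>)"

definition alg_run :: "nat \<Rightarrow> (nat \<Rightarrow> real) \<Rightarrow> (nat \<Rightarrow> real) \<Rightarrow> real \<Rightarrow> nat \<Rightarrow> alg_state" where
  "alg_run n q z K k = (alg_step n q z ^^ k) (alg_init n z K)"

definition alg_cond :: "nat \<Rightarrow> alg_state \<Rightarrow> bool" where
  "alg_cond n st \<longleftrightarrow> stB st > 0 \<and> stS st \<noteq> {0..n + 1}"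

definition performed :: "nat \<Rightarrow> (nat \<Rightarrow> real) \<Rightarrow> (nat \<Rightarrow> real) \<Rightarrow> real \<Rightarrow> nat \<Rightarrow> bool" where
  "performed n q z K k \<longleftrightarrow> (\<forall>j\<le>k. alg_cond n (alg_run n q z K j))"

definition updates :: "nat \<Rightarrow> (nat \<Rightarrow> real) \<Rightarrow> (nat \<Rightarrow> real) \<Rightarrow> real \<Rightarrow> nat \<Rightarrow> nat \<Rightarrow> bool" where
  "updates n q z K k i \<longleftrightarrow> performed n q z K k \<and>
     (let st = alg_run n q z K k; s = istar n st in iL st s < i \<and> i < s)"

definition blocker :: "nat \<Rightarrow> (nat \<Rightarrow> real) \<Rightarrow> (nat \<Rightarrow> real) \<Rightarrow> real \<Rightarrow> nat \<Rightarrow> nat" where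
  "blocker n q z K i =
     (if \<exists>k. updates n q z K k i
      then istar n (alg_run n q z K (GREATEST k. updates n q z K k i))
      else n + 1)"

end

theory Submission
  imports Defs
begin

text \<open>
  Throughout the run, every index i outside S satisfies y_i = avg(i, r), where r is the
  successor of i in S; moreover r is the i* of the last iteration that updated y_i (or n + 1
  if there was none). Once i* has been added to S it is never updated again, so b(i*) is the
  successor R of i* in S at the iteration in question. Every index strictly between i_L and R
  has successor R as well, so its y-value is its average up to R. Minimality of y_{i*} (strict
  to the left of i*, by the tie-breaking rule) compares these averages, and since avg(i, k)
  is a weighted mean of avg(i, j) and avg(j, k), both inequalities follow.
\<close>

lemma sumz_split: "i \<le> j \<Longrightarrow> j \<le> k \<Longrightarrow> sumz z i k = sumz z i j + sumz z j k"
  unfolding sumz_def by (simp add: sum.atLeastLessThan_concat)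

lemma length_mult_avg: "i \<le> j \<Longrightarrow> real (j - i) * avg z i j = sumz z i j"
  by (cases "i = j") (simp_all add: avg_def sumz_def)

lemma avg_weighted_split:
  assumes "i \<le> j" "j \<le> k"
  shows "real (k - i) * avg z i k = real (j - i) * avg z i j + real (k - j) * avg z j k"
  using length_mult_avg[of i k z] length_mult_avg[of i j z] length_mult_avg[of j k z]
    sumz_split[of i j k z] assms by linarith

lemma avg_le_avg_right_iff:
  assumes "i < j" "j < k"
  shows "avg z i k \<le> avg z j k \<longleftrightarrow> avg z i j \<le> avg z j k"
proof -
  let ?a = "real (j - i)" and ?b = "real (k - j)"
  have split: "(?a + ?b) * avg z i k = ?a * avg z i j + ?b * avg z j k"
    using avg_weighted_split[of i j k z] assms by (simp add: of_nat_diff)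
  have "avg z i k \<le> avg z j k \<longleftrightarrow> (?a + ?b) * avg z i k \<le> (?a + ?b) * avg z j k"
    using assms by (simp add: add_pos_pos)
  also have "\<dots> \<longleftrightarrow> ?a * avg z i j \<le> ?a * avg z j k"
    using split unfolding distrib_right by linarith
  also have "\<dots> \<longleftrightarrow> avg z i j \<le> avg z j k"
    using assms by simp
  finally show ?thesis .
qed

lemma avg_less_avg_left_iff:
  assumes "i < j" "j < k"
  shows "avg z j k < avg z i k \<longleftrightarrow> avg z i k < avg z i j"
proof -
  let ?a = "real (j - i)" and ?b = "real (k - j)"
  have split: "(?a + ?b) * avg z i k = ?a * avg z i j + ?b * avg z j k"
    using avg_weighted_split[of i j k z] assms by (simp add: of_nat_diff)
  have "avg z j k < avg z i k \<longleftrightarrow> ?b * avg z j k < ?b * avg z i k"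
    using assms by simp
  also have "\<dots> \<longleftrightarrow> ?a * avg z i k < ?a * avg z i j"
    using split unfolding distrib_right by linarith
  also have "\<dots> \<longleftrightarrow> avg z i k < avg z i j"
    using assms by simp
  finally show ?thesis .
qed

definition well_formed_S :: "nat \<Rightarrow> alg_state \<Rightarrow> bool" where
  "well_formed_S n st \<longleftrightarrow> 0 \<in> stS st \<and> n + 1 \<in> stS st \<and> stS st \<subseteq> {0..n + 1}"

definition y_invariant :: "nat \<Rightarrow> (nat \<Rightarrow> real) \<Rightarrow> alg_state \<Rightarrow> bool" where
  "y_invariant n z st \<longleftrightarrow> (\<forall>i\<in>{1..n} - stS st. sty st i = avg z i (iR st i))"

lemma finite_below: "finite {j \<in> A. j < (t::nat)}"
  by (rule finite_subset[of _ "{..<t}"]) auto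

lemma le_iL: "u \<in> stS st \<Longrightarrow> u < t \<Longrightarrow> u \<le> iL st t"
  unfolding iL_def using finite_below by (auto intro: Max_ge)

lemma iL_props:
  assumes "0 \<in> stS st" "0 < t"
  shows "iL st t \<in> stS st" "iL st t < t"
proof -
  have "iL st t \<in> {j \<in> stS st. j < t}"
    unfolding iL_def by (rule Max_in[OF finite_below]) (use assms in auto)
  then show "iL st t \<in> stS st" "iL st t < t" by auto
qed

lemma iR_props:
  assumes "well_formed_S n st" "i \<le> n"
  shows "iR st i \<in> stS st" "i < iR st i" "\<And>u. u \<in> stS st \<Longrightarrow> i < u \<Longrightarrow> iR st i \<le> u"
proof -
  have fin: "finite {j \<in> stS st. i < j}"
    by (rule finite_subset[of _ "{0..n+1}"]) (use assms in \<open>auto simp: well_formed_S_def\<close>)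
  have ne: "{j \<in> stS st. i < j} \<noteq> {}" using assms by (auto simp: well_formed_S_def)
  show "iR st i \<in> stS st" "i < iR st i" using Min_in[OF fin ne] unfolding iR_def by auto
  show "\<And>u. u \<in> stS st \<Longrightarrow> i < u \<Longrightarrow> iR st i \<le> u" unfolding iR_def using fin by auto
qed

lemma iR_eqI:
  assumes "well_formed_S n st" "i \<le> n" "r \<in> stS st" "i < r"
    and "\<And>u. u \<in> stS st \<Longrightarrow> i < u \<Longrightarrow> r \<le> u"
  shows "iR st i = r"
  using iR_props[OF assms(1,2)] assms(3-5) by (meson le_antisym)

lemma iR_eq_if_no_S_between:
  assumes "well_formed_S n st" "i \<le> j" "j \<le> n" "\<And>u. u \<in> stS st \<Longrightarrow> i < u \<Longrightarrow> j < u"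
  shows "iR st i = iR st j"
  using iR_props[OF assms(1,3)] assms by (intro iR_eqI[of n]) auto

lemma iR_insert:
  assumes "well_formed_S n st" "stS st' = insert t (stS st)" "t \<le> n" "i \<le> n"
  shows "iR st' i = (if i < t \<and> t < iR st i then t else iR st i)"
proof -
  have wf': "well_formed_S n st'"
    using assms unfolding well_formed_S_def by auto
  note R = iR_props[OF assms(1,4)]
  show ?thesis
    by (rule iR_eqI[OF wf' assms(4)])
      (use assms(2) in \<open>auto split: if_splits simp: R(1,2) dest: R(3)\<close>)
qed

lemma iR_greater_iff_iL_less:
  assumes "well_formed_S n st" "i \<notin> stS st" "t \<notin> stS st" "i < t" "t \<le> n"
  shows "t < iR st i \<longleftrightarrow> iL st t < i"
proof -
  have "0 \<in> stS st" "0 < t" "i \<le> n" using assms by (auto simp: well_formed_S_def)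
  note L = iL_props[OF this(1,2)] and R = iR_props[OF assms(1) \<open>i \<le> n\<close>]
  show ?thesis
  proof
    assume "t < iR st i"
    show "iL st t < i"
    proof (rule ccontr)
      assume "\<not> iL st t < i"
      then have "i < iL st t" using L(1) assms(2) by (cases "iL st t = i") auto
      then show False using R(3)[OF L(1)] L(2) \<open>t < iR st i\<close> by simp
    qed
  next
    assume "iL st t < i"
    show "t < iR st i"
    proof (rule ccontr)
      assume "\<not> t < iR st i"
      then have "iR st i < t" using R(1) assms(3) by (cases "iR st i = t") auto
      then show False using le_iL[OF R(1) \<open>iR st i < t\<close>] R(2) \<open>iL st t < i\<close> by simp
    qed
  qed
qed

lemma istar_props:
  assumes "well_formed_S n st" "stS st \<noteq> {0..n + 1}"
  shows "istar n st \<in> {1..n} - stS st"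
    and "\<And>j. j \<in> {1..n} - stS st \<Longrightarrow> sty st (istar n st) \<le> sty st j"
    and "\<And>j. j \<in> {1..n} - stS st \<Longrightarrow> j < istar n st \<Longrightarrow> sty st (istar n st) < sty st j"
proof -
  let ?A = "{1..n} - stS st"
  let ?P = "\<lambda>i. i \<in> ?A \<and> (\<forall>j\<in>?A. sty st i \<le> sty st j)"
  have "?A \<noteq> {}"
  proof
    assume "?A = {}"
    moreover have "{0..n + 1} \<subseteq> insert 0 (insert (n + 1) {1..n})"
      by (auto simp: le_Suc_eq)
    ultimately have "{0..n + 1} \<subseteq> stS st"
      using assms(1) unfolding well_formed_S_def by blast
    with assms show False unfolding well_formed_S_def by blast
  qed
  then obtain m where "is_arg_min (sty st) (\<lambda>i. i \<in> ?A) m"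
    using ex_is_arg_min_if_finite[of ?A "sty st"] by blast
  then have "?P m" unfolding is_arg_min_def by (meson not_le)
  then have P: "?P (istar n st)" unfolding istar_def by (rule LeastI)
  then show "istar n st \<in> ?A" "\<And>j. j \<in> ?A \<Longrightarrow> sty st (istar n st) \<le> sty st j" by auto
  fix j assume "j \<in> ?A" "j < istar n st"
  moreover have "\<not> ?P j" using not_less_Least[OF \<open>j < istar n st\<close>[unfolded istar_def]] .
  ultimately obtain j' where "j' \<in> ?A" "sty st j' < sty st j" by (meson not_le)
  then show "sty st (istar n st) < sty st j" using P by (meson order.strict_trans1)
qed

lemma stS_alg_step: "stS (alg_step n q z st) = insert (istar n st) (stS st)"
  unfolding alg_step_def Let_def by simp

lemma sty_alg_step:
  "sty (alg_step n q z st) i =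
     (if iL st (istar n st) < i \<and> i < istar n st then avg z i (istar n st) else sty st i)"
  unfolding alg_step_def Let_def by simp

lemma well_formed_S_alg_step:
  assumes "well_formed_S n st" "stS st \<noteq> {0..n + 1}"
  shows "well_formed_S n (alg_step n q z st)"
  using assms istar_props(1)[OF assms] unfolding well_formed_S_def stS_alg_step by auto

lemma iR_alg_step:
  assumes "well_formed_S n st" "stS st \<noteq> {0..n + 1}" "i \<in> {1..n} - stS (alg_step n q z st)"
  defines "t \<equiv> istar n st"
  shows "iR (alg_step n q z st) i = (if iL st t < i \<and> i < t then t else iR st i)"
proof -
  have t: "t \<in> {1..n} - stS st" using istar_props(1)[OF assms(1,2)] by (simp add: t_def)
  have i: "i \<in> {1..n} - stS st" "i \<noteq> t" using assms(3) by (auto simp: stS_alg_step t_def)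
  have "i < t \<and> t < iR st i \<longleftrightarrow> iL st t < i \<and> i < t"
    using iR_greater_iff_iL_less[OF assms(1), of i t] t i by auto
  then show ?thesis
    using iR_insert[OF assms(1) stS_alg_step[of n q z st, folded t_def]] t i by auto
qed

lemma y_invariant_alg_step:
  assumes "well_formed_S n st" "stS st \<noteq> {0..n + 1}" "y_invariant n z st"
  shows "y_invariant n z (alg_step n q z st)"
  unfolding y_invariant_def
proof
  fix i assume i: "i \<in> {1..n} - stS (alg_step n q z st)"
  then have "i \<in> {1..n} - stS st" by (simp add: stS_alg_step)
  then show "sty (alg_step n q z st) i = avg z i (iR (alg_step n q z st) i)"
    using assms(3) unfolding y_invariant_def iR_alg_step[OF assms(1,2) i] sty_alg_step by simp
qed

definition blocker_before ::
    "nat \<Rightarrow> (nat \<Rightarrow> real) \<Rightarrow> (nat \<Rightarrow> real) \<Rightarrow> real \<Rightarrow> nat \<Rightarrow> nat \<Rightarrow> nat" where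
  "blocker_before n q z K j i =
     (if \<exists>k<j. updates n q z K k i
      then istar n (alg_run n q z K (GREATEST k. k < j \<and> updates n q z K k i))
      else n + 1)"

lemma blocker_before_0: "blocker_before n q z K 0 i = n + 1"
  by (simp add: blocker_before_def)

lemma blocker_before_Suc:
  "blocker_before n q z K (Suc j) i =
     (if updates n q z K j i then istar n (alg_run n q z K j) else blocker_before n q z K j i)"
proof (cases "updates n q z K j i")
  case True
  then have "(GREATEST k. k < Suc j \<and> updates n q z K k i) = j"
    by (intro Greatest_equality) auto
  with True show ?thesis by (auto simp: blocker_before_def)
next
  case False
  then have eq: "(\<lambda>k. k < Suc j \<and> updates n q z K k i) = (\<lambda>k. k < j \<and> updates n q z K k i)"
    by (auto simp: less_Suc_eq)
  show ?thesis unfolding blocker_before_def eq using False by simp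
qed

lemma blocker_eq_blocker_before:
  assumes "\<And>k. j \<le> k \<Longrightarrow> \<not> updates n q z K k i"
  shows "blocker n q z K i = blocker_before n q z K j i"
proof -
  have "(\<lambda>k. updates n q z K k i) = (\<lambda>k. k < j \<and> updates n q z K k i)"
    using assms not_le by auto
  then show ?thesis unfolding blocker_def blocker_before_def by (simp only:)
qed

lemma alg_run_Suc: "alg_run n q z K (Suc j) = alg_step n q z (alg_run n q z K j)"
  unfolding alg_run_def by simp

lemma stS_alg_run_mono: "j \<le> j' \<Longrightarrow> stS (alg_run n q z K j) \<subseteq> stS (alg_run n q z K j')"
  by (induction j' rule: dec_induct) (auto simp: alg_run_Suc stS_alg_step)

lemma updates_iff:
  "performed n q z K j \<Longrightarrow> updates n q z K j i \<longleftrightarrow>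
     iL (alg_run n q z K j) (istar n (alg_run n q z K j)) < i \<and> i < istar n (alg_run n q z K j)"
  unfolding updates_def Let_def by simp

lemma updates_imp_notin_stS: "updates n q z K j i \<Longrightarrow> i \<notin> stS (alg_run n q z K j)"
  unfolding updates_def Let_def using le_iL not_le by blast

lemma istar_not_updated_later:
  assumes "k \<le> k'"
  shows "\<not> updates n q z K k' (istar n (alg_run n q z K k))"
proof
  assume upd: "updates n q z K k' (istar n (alg_run n q z K k))"
  show False
  proof (cases "k = k'")
    case True
    with upd show False unfolding updates_def Let_def by simp
  next
    case False
    then have "stS (alg_run n q z K (Suc k)) \<subseteq> stS (alg_run n q z K k')"
      using assms by (intro stS_alg_run_mono) simp
    then have "istar n (alg_run n q z K k) \<in> stS (alg_run n q z K k')"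
      by (auto simp: alg_run_Suc stS_alg_step)
    with updates_imp_notin_stS[OF upd] show False by contradiction
  qed
qed

lemma alg_run_invariant:
  assumes "\<forall>j'<j. alg_cond n (alg_run n q z K j')"
  shows "well_formed_S n (alg_run n q z K j) \<and> y_invariant n z (alg_run n q z K j) \<and>
    (\<forall>i\<in>{1..n} - stS (alg_run n q z K j). iR (alg_run n q z K j) i = blocker_before n q z K j i)"
  using assms
proof (induction j)
  case 0
  have "iR (alg_init n z K) i = n + 1" if "i \<in> {1..n}" for i
    by (rule iR_eqI[of n]) (use that in \<open>auto simp: alg_init_def well_formed_S_def\<close>)
  then show ?case
    by (auto simp: alg_run_def alg_init_def well_formed_S_def y_invariant_def blocker_before_0)
next
  case (Suc j)
  define st where "st = alg_run n q z K j"
  have IH: "well_formed_S n st" "y_invariant n z st"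
    "\<And>i. i \<in> {1..n} - stS st \<Longrightarrow> iR st i = blocker_before n q z K j i"
    using Suc unfolding st_def by auto
  have nonfull: "stS st \<noteq> {0..n + 1}" using Suc.prems by (simp add: st_def alg_cond_def)
  have upd: "updates n q z K j i \<longleftrightarrow> iL st (istar n st) < i \<and> i < istar n st" for i
    using Suc.prems updates_iff[of n q z K j i] unfolding st_def performed_def by simp
  have "iR (alg_step n q z st) i = blocker_before n q z K (Suc j) i"
    if "i \<in> {1..n} - stS (alg_step n q z st)" for i
    using iR_alg_step[OF IH(1) nonfull that] IH(3)[of i] that
    by (simp add: blocker_before_Suc upd stS_alg_step st_def)
  then show ?case
    using well_formed_S_alg_step[OF IH(1) nonfull] y_invariant_alg_step[OF IH(1) nonfull IH(2)]
    by (simp add: alg_run_Suc st_def)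
qed

lemma avg_istar_le_avg_to_iR:
  assumes "well_formed_S n st" "stS st \<noteq> {0..n + 1}" "y_invariant n z st"
    and "istar n st < i" "i < iR st (istar n st)"
  shows "avg z (istar n st) i \<le> avg z i (iR st (istar n st))"
proof -
  let ?s = "istar n st" and ?R = "iR st (istar n st)"
  have s: "?s \<in> {1..n} - stS st" using istar_props(1)[OF assms(1,2)] .
  note R = iR_props[OF assms(1), of ?s]
  have "?R \<le> n + 1" using R(1) s assms(1) by (auto simp: well_formed_S_def)
  then have i: "i \<in> {1..n} - stS st" using R(3)[of i] s assms(4,5) by auto
  have "?R = iR st i"
  proof (rule iR_eq_if_no_S_between[OF assms(1)])
    fix u assume "u \<in> stS st" "?s < u"
    then show "i < u" using R(3) s assms(5) by fastforce
  qed (use assms(4) i in auto)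
  then have "avg z ?s ?R \<le> avg z i ?R"
    using istar_props(2)[OF assms(1,2) i] assms(3) s i unfolding y_invariant_def by simp
  then show ?thesis using avg_le_avg_right_iff[OF assms(4,5)] by simp
qed

lemma avg_to_iR_less_avg_to_istar:
  assumes "well_formed_S n st" "stS st \<noteq> {0..n + 1}" "y_invariant n z st"
    and "iL st (istar n st) < i" "i < istar n st"
  shows "avg z i (iR st (istar n st)) < avg z i (istar n st)"
proof -
  let ?s = "istar n st" and ?R = "iR st (istar n st)"
  have s: "?s \<in> {1..n} - stS st" using istar_props(1)[OF assms(1,2)] .
  have i: "i \<in> {1..n} - stS st" using le_iL[of i st ?s] s assms(4,5) by auto
  have "iR st i = ?R"
  proof (rule iR_eq_if_no_S_between[OF assms(1)])
    fix u assume u: "u \<in> stS st" "i < u"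
    then have "\<not> u < ?s" using le_iL[of u st ?s] assms(4) by auto
    with u(1) s show "?s < u" by (cases "u = ?s") auto
  qed (use assms(5) s in auto)
  then have "avg z ?s ?R < avg z i ?R"
    using istar_props(3)[OF assms(1,2) i assms(5)] assms(3) s i unfolding y_invariant_def by simp
  then show ?thesis
    using avg_less_avg_left_iff[OF assms(5) iR_props(2)[OF assms(1), of ?s]] s by auto
qed

theorem lemma9:
  fixes n :: nat and q z :: "nat \<Rightarrow> real" and K :: real and k :: nat
  assumes "n \<ge> 1"
    and "\<forall>i\<in>{1..n}. 0 < q i"
    and "\<forall>i j. 1 \<le> i \<longrightarrow> i \<le> j \<longrightarrow> j \<le> n \<longrightarrow> q i \<le> q j"
    and "\<forall>i\<in>{1..n}. 0 < z i"
    and "K > 0"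
    and "performed n q z K k"
  shows "(\<forall>i. istar n (alg_run n q z K k) < i
                \<and> i < blocker n q z K (istar n (alg_run n q z K k))
          \<longrightarrow> avg z (istar n (alg_run n q z K k)) i
              \<le> avg z i (blocker n q z K (istar n (alg_run n q z K k))))
       \<and> (\<forall>i. iL (alg_run n q z K k) (istar n (alg_run n q z K k)) < i
                \<and> i < istar n (alg_run n q z K k)
          \<longrightarrow> avg z i (blocker n q z K (istar n (alg_run n q z K k)))
              < avg z i (istar n (alg_run n q z K k)))"
proof -
  define st where "st = alg_run n q z K k"
  define s where "s = istar n st"
  have conds: "\<forall>j'<k. alg_cond n (alg_run n q z K j')" "alg_cond n st"
    using assms(6) unfolding performed_def st_def by auto
  then have nonfull: "stS st \<noteq> {0..n + 1}" by (simp add: alg_cond_def)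
  have wf: "well_formed_S n st" and y: "y_invariant n z st"
    and R: "\<And>i. i \<in> {1..n} - stS st \<Longrightarrow> iR st i = blocker_before n q z K k i"
    using alg_run_invariant[OF conds(1)] unfolding st_def by auto
  have "blocker n q z K s = blocker_before n q z K k s"
    using istar_not_updated_later unfolding s_def st_def by (intro blocker_eq_blocker_before)
  also have "\<dots> = iR st s" using R istar_props(1)[OF wf nonfull] by (simp add: s_def)
  finally show ?thesis
    using avg_istar_le_avg_to_iR[OF wf nonfull y] avg_to_iR_less_avg_to_istar[OF wf nonfull y]
    unfolding st_def[symmetric] s_def[symmetric] by (simp add: s_def)
qed

end
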